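(* Let $V$ be a countable set, $\Omega_0$ a finite set, $\Omega=\Omega_0^V$, $q\in\mathbb N$, and let $\Phi=\{\Phi_B\}_{B\Subset V}$ be an absolutely summable potential, i.e. each $\Phi_B:\Omega\to\mathbb R$ is $\mathcal F_B$-measurable and $\sum_{B\Subset V,\,B\ni x}\|\Phi_B\|_\infty<\infty$ for every $x\in V$. For $\Lambda\Subset V$, $\sigma_\Lambda\in\Omega_\Lambda=\Omega_0^\Lambda$ and $\omega_1,\dots,\omega_q\in\Omega$ set $$H_{\Lambda,\Phi}(\sigma_\Lambda;\omega_1,\dots,\omega_q)=\sum_{B\subseteq\Lambda}\Phi_B(\sigma_\Lambda)+\frac1q\sum_{\substack{B\Subset V\\ B\cap\Lambda\ne\emptyset,\ B\cap\Lambda^c\ne\emptyset}}\sum_{i=1}^q\Phi_B(\sigma_\Lambda\omega_{i,\Lambda^c}),$$ and define the Gibbs $q$-specification $\gamma^\Phi=(\gamma^\Phi_\Lambda)_{\Lambda\Subset V}$ by $$\gamma^\Phi_\Lambda(A\mid\omega_1,\dots,\omega_q)=\frac{1}{Z_\Lambda(\omega_1,\dots,\omega_q)}\sum_{\sigma_\Lambda\in\Omega_\Lambda}e^{-H_{\Lambda,\Phi}(\sigma_\Lambda;\omega_1,\dots,\omega_q)}\,\frac1q\sum_{i=1}^q\mathbf 1_A(\sigma_\Lambda\omega_{i,\Lambda^c}),\quad A\in\mathcal F,$$ with $Z_\Lambda(\omega_1,\dots,\omega_q)=\sum_{\sigma_\Lambda\in\Omega_\Lambda}e^{-H_{\Lambda,\Phi}(\sigma_\Lambda;\omega_1,\dots,\omega_q)}$.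 Then $\gamma^\Phi$ is quasilocal.
   Context: $\mathcal F$ is the product $\sigma$-algebra on $\Omega$; $\mathcal F_B$ is the $\sigma$-algebra generated by the coordinates in $B$; a function $\Phi_B$ that is $\mathcal F_B$-measurable is regarded as a function of the configuration on $B$, so $\Phi_B(\sigma_\Lambda)$ makes sense for $B\subseteq\Lambda$. $\sigma_\Lambda\omega_{\Lambda^c}$ is the configuration equal to $\sigma_\Lambda$ on $\Lambda$ and to $\omega$ on $\Lambda^c$. $\Omega$ carries the topology of coordinatewise convergence and $\Omega^q$ the product topology. A family $(\gamma_\Lambda)_{\Lambda\Subset V}$ of kernels is quasilocal if for each $\Lambda\Subset V$ and every event $A\in\mathcal F_\Lambda$ the map $(\omega_1,\dots,\omega_q)\mapsto\gamma_\Lambda(A\mid\omega_1,\dots,\omega_q)$ is continuous on $\Omega^q$. *)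

theory Defs
  imports "HOL-Analysis.Analysis"
begin

(* Configurations: <Omega> = 'v <Rightarrow> 'a with 'v countable (the vertex set V)
  and 'a finite (the single-site space <Omega><^sub>0). *)

definition F_sub :: "'v set \<Rightarrow> ('v \<Rightarrow> 'a) measure" where
  "F_sub B = vimage_algebra UNIV (\<lambda>\<omega>. restrict \<omega> B) (PiM B (\<lambda>_. count_space UNIV))"

definition glue :: "'v set \<Rightarrow> ('v \<Rightarrow> 'a) \<Rightarrow> ('v \<Rightarrow> 'a) \<Rightarrow> ('v \<Rightarrow> 'a)" where
  "glue \<Lambda> \<sigma> \<omega> = (\<lambda>x. if x \<in> \<Lambda> then \<sigma> x else \<omega> x)"

definition Omega_loc :: "'v set \<Rightarrow> ('v \<Rightarrow> 'a) set" where
  "Omega_loc \<Lambda> = PiE \<Lambda> (\<lambda>_. UNIV)"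

(* Hamiltonian H_{<Lambda>,<Phi>}(<sigma>_<Lambda>; <omega>_1..<omega>_q); boundary conditions <omega>_1..<omega>_q are <omega> 0 .. <omega> (q-1). *)
definition gibbsH :: "nat \<Rightarrow> ('v set \<Rightarrow> ('v \<Rightarrow> 'a) \<Rightarrow> real) \<Rightarrow> 'v set \<Rightarrow> ('v \<Rightarrow> 'a)
    \<Rightarrow> (nat \<Rightarrow> 'v \<Rightarrow> 'a) \<Rightarrow> real" where
  "gibbsH q \<Phi> \<Lambda> \<sigma> \<omega> =
     (\<Sum>B\<in>Pow \<Lambda>. \<Phi> B \<sigma>)
     + (1 / real q) * infsum (\<lambda>B. \<Sum>i<q. \<Phi> B (glue \<Lambda> \<sigma> (\<omega> i)))
                        {B. finite B \<and> B \<inter> \<Lambda> \<noteq> {} \<and> B - \<Lambda> \<noteq> {}}"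

definition partZ :: "nat \<Rightarrow> ('v set \<Rightarrow> ('v \<Rightarrow> 'a) \<Rightarrow> real) \<Rightarrow> 'v set
    \<Rightarrow> (nat \<Rightarrow> 'v \<Rightarrow> 'a) \<Rightarrow> real" where
  "partZ q \<Phi> \<Lambda> \<omega> = (\<Sum>\<sigma>\<in>Omega_loc \<Lambda>. exp (- gibbsH q \<Phi> \<Lambda> \<sigma> \<omega>))"

definition gibbs_spec :: "nat \<Rightarrow> ('v set \<Rightarrow> ('v \<Rightarrow> 'a) \<Rightarrow> real) \<Rightarrow> 'v set
    \<Rightarrow> ('v \<Rightarrow> 'a) set \<Rightarrow> (nat \<Rightarrow> 'v \<Rightarrow> 'a) \<Rightarrow> real" where
  "gibbs_spec q \<Phi> \<Lambda> A \<omega> =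
     (1 / partZ q \<Phi> \<Lambda> \<omega>) *
     (\<Sum>\<sigma>\<in>Omega_loc \<Lambda>. exp (- gibbsH q \<Phi> \<Lambda> \<sigma> \<omega>) *
        ((1 / real q) * (\<Sum>i<q. indicator A (glue \<Lambda> \<sigma> (\<omega> i)))))"

definition Omega_top :: "('v \<Rightarrow> 'a) topology" where
  "Omega_top = product_topology (\<lambda>_. discrete_topology UNIV) UNIV"

definition Omega_q_top :: "nat \<Rightarrow> (nat \<Rightarrow> 'v \<Rightarrow> 'a) topology" where
  "Omega_q_top q = product_topology (\<lambda>_. Omega_top) {..<q}"

definition quasilocal :: "nat \<Rightarrow> ('v set \<Rightarrow> ('v \<Rightarrow> 'a) set \<Rightarrow> (nat \<Rightarrow> 'v \<Rightarrow> 'a) \<Rightarrow> real) \<Rightarrow> bool" where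
  "quasilocal q \<gamma> \<longleftrightarrow>
     (\<forall>\<Lambda> A. finite \<Lambda> \<and> A \<in> sets (F_sub \<Lambda>) \<longrightarrow>
        continuous_map (Omega_q_top q) euclideanreal (\<gamma> \<Lambda> A))"

end

theory Submission
  imports Defs
begin

(* An F_B-measurable function depends only on the coordinates in B. For B finite such a
   function therefore takes finitely many values, so the sup norm of Phi_B is attained, and it is
   continuous for coordinatewise convergence. The boundary part of the Hamiltonian is a sum over
   the finite sets B meeting both Lambda and its complement, dominated termwise by q times the
   sup norm of Phi_B; these norms are summable because every such B contains one of the finitely
   many sites of Lambda. By the Weierstrass M-test the sum converges uniformly in the boundary
   conditions, so the Hamiltonian is continuous. The specification is then a finite combination
   of exponentials of it and of indicators of the local event A, divided by the positive
   partition function. *)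

definition depends_on :: "'v set \<Rightarrow> (('v \<Rightarrow> 'a) \<Rightarrow> 'b) \<Rightarrow> bool" where
  "depends_on B f \<longleftrightarrow> (\<forall>w w'. (\<forall>x\<in>B. w x = w' x) \<longrightarrow> f w = f w')"

lemma depends_onI:
  "(\<And>w w'. \<forall>x\<in>B. w x = w' x \<Longrightarrow> f w = f w') \<Longrightarrow> depends_on B f"
  unfolding depends_on_def by blast

lemma depends_onD:
  "depends_on B f \<Longrightarrow> \<forall>x\<in>B. w x = w' x \<Longrightarrow> f w = f w'"
  unfolding depends_on_def by blast

lemma depends_on_glue:
  "depends_on B f \<Longrightarrow> depends_on B (\<lambda>w. f (glue \<Lambda> \<sigma> w))"
  unfolding depends_on_def glue_def by simp

lemma depends_on_indicator_F_sub:
  fixes A :: "('v \<Rightarrow> 'a) set"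
  assumes "A \<in> sets (F_sub B)"
  shows "depends_on B (indicator A)"
proof (rule depends_onI)
  fix w w' :: "'v \<Rightarrow> 'a" assume "\<forall>x\<in>B. w x = w' x"
  then have "restrict w B = restrict w' B" by (auto simp: restrict_def)
  have "(\<lambda>\<omega>::'v \<Rightarrow> 'a. restrict \<omega> B) \<in> UNIV \<rightarrow> space (PiM B (\<lambda>_. count_space UNIV))"
    by (auto simp: space_PiM)
  from sets_vimage_algebra2[OF this] assms obtain X
    where "A = (\<lambda>\<omega>. restrict \<omega> B) -` X \<inter> UNIV"
    unfolding F_sub_def by auto
  with \<open>restrict w B = restrict w' B\<close> show "indicator A w = indicator A w'"
    by (simp add: indicator_def)
qed

lemma depends_on_measurable_F_sub:
  fixes f :: "('v \<Rightarrow> 'a) \<Rightarrow> 'b::t1_space"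
  assumes "f \<in> borel_measurable (F_sub B)"
  shows "depends_on B f"
proof (rule depends_onI)
  fix w w' :: "'v \<Rightarrow> 'a" assume agree: "\<forall>x\<in>B. w x = w' x"
  have "space (F_sub B) = UNIV" by (simp add: F_sub_def)
  with measurable_sets[OF assms, of "{f w}"] have "f -` {f w} \<in> sets (F_sub B)"
    by (metis Int_UNIV_right borel_closed closed_singleton)
  from depends_onD[OF depends_on_indicator_F_sub[OF this] agree]
  show "f w = f w'" by (simp add: indicator_def split: if_splits)
qed

lemma finite_Omega_loc: "finite B \<Longrightarrow> finite (Omega_loc B :: ('v \<Rightarrow> 'a::finite) set)"
  unfolding Omega_loc_def by (intro finite_PiE) auto

lemma Omega_loc_nonempty: "Omega_loc B \<noteq> {}"
  by (simp add: Omega_loc_def PiE_eq_empty_iff)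

lemma finite_range_depends_on:
  fixes f :: "('v \<Rightarrow> 'a::finite) \<Rightarrow> 'b"
  assumes "finite B" "depends_on B f"
  shows "finite (range f)"
proof -
  have "range f \<subseteq> f ` Omega_loc B"
  proof (rule image_subsetI)
    fix \<omega>
    have "f \<omega> = f (restrict \<omega> B)"
      by (rule depends_onD[OF assms(2)]) simp
    moreover have "restrict \<omega> B \<in> Omega_loc B"
      by (simp add: Omega_loc_def)
    ultimately show "f \<omega> \<in> f ` Omega_loc B" by simp
  qed
  then show ?thesis
    using finite_Omega_loc[OF assms(1)] finite_subset by blast
qed

lemma abs_le_SUP_abs_depends_on:
  fixes f :: "('v \<Rightarrow> 'a::finite) \<Rightarrow> real"
  assumes "finite B" "depends_on B f"
  shows "\<bar>f w\<bar> \<le> (SUP \<omega>. \<bar>f \<omega>\<bar>)"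
proof -
  have "finite (range (\<lambda>\<omega>. \<bar>f \<omega>\<bar>))"
    using finite_range_depends_on[OF assms] by (simp add: image_image[symmetric])
  then show ?thesis
    by (intro cSUP_upper) auto
qed

lemma topspace_Omega_top [simp]: "topspace Omega_top = UNIV"
  by (simp add: Omega_top_def)

lemma openin_Omega_top_cylinder:
  assumes "finite B"
  shows "openin Omega_top {w. \<forall>x\<in>B. w x = w0 x}"
proof -
  have "openin Omega_top {w. w x = w0 x}" for x
  proof -
    have "openin Omega_top {w \<in> topspace Omega_top. w x \<in> {w0 x}}"
      unfolding Omega_top_def
      by (rule openin_continuous_map_preimage[OF continuous_map_product_projection]) auto
    then show ?thesis by simp
  qed
  from openin_INT[OF assms this] have "openin Omega_top ((\<Inter>x\<in>B. {w. w x = w0 x}) \<inter> UNIV)"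
    by (simp only: topspace_Omega_top)
  moreover have "(\<Inter>x\<in>B. {w. w x = w0 x}) \<inter> UNIV = {w. \<forall>x\<in>B. w x = w0 x}" by auto
  ultimately show ?thesis by simp
qed

lemma continuous_map_depends_on:
  fixes f :: "('v \<Rightarrow> 'a) \<Rightarrow> 'b::topological_space"
  assumes "finite B" "depends_on B f"
  shows "continuous_map Omega_top euclidean f"
  unfolding continuous_map_def
proof (intro conjI allI impI)
  show "f \<in> topspace Omega_top \<rightarrow> topspace euclidean" by simp
  fix U :: "'b set"
  have "openin Omega_top {w. f w \<in> U}"
  proof (rule openin_subopen[THEN iffD2], intro ballI)
    fix w0 assume w0: "w0 \<in> {w. f w \<in> U}"
    have "{w. \<forall>x\<in>B. w x = w0 x} \<subseteq> {w. f w \<in> U}"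
    proof
      fix w assume "w \<in> {w. \<forall>x\<in>B. w x = w0 x}"
      then have "f w = f w0" by (intro depends_onD[OF assms(2)]) simp
      with w0 show "w \<in> {w. f w \<in> U}" by simp
    qed
    then show "\<exists>T. openin Omega_top T \<and> w0 \<in> T \<and> T \<subseteq> {w. f w \<in> U}"
      using openin_Omega_top_cylinder[OF assms(1)] by blast
  qed
  then show "openin Omega_top {w \<in> topspace Omega_top. f w \<in> U}" by simp
qed

lemma continuous_map_Omega_q_top_component:
  "i < q \<Longrightarrow> continuous_map (Omega_q_top q) Omega_top (\<lambda>\<omega>. \<omega> i)"
  unfolding Omega_q_top_def by (metis continuous_map_product_projection lessThan_iff)

lemma continuous_map_Omega_q_top_depends_on:
  assumes "finite B" "depends_on B f" "i < q"
  shows "continuous_map (Omega_q_top q) euclideanreal (\<lambda>\<omega>. f (\<omega> i))"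
  using continuous_map_compose[OF continuous_map_Omega_q_top_component[OF assms(3)]
      continuous_map_depends_on[OF assms(1,2)]]
  by (simp add: o_def)

lemma continuous_map_real_exp:
  "continuous_map X euclideanreal f \<Longrightarrow> continuous_map X euclideanreal (\<lambda>x. exp (f x))"
  using continuous_map_compose[of X euclideanreal f euclideanreal exp]
  by (simp add: o_def continuous_on_exp continuous_on_id)

lemma continuous_map_infsum_dominated:
  fixes f :: "'b \<Rightarrow> 'x \<Rightarrow> 'c::banach"
  assumes "M summable_on S"
    and "\<And>B x. B \<in> S \<Longrightarrow> x \<in> topspace X \<Longrightarrow> norm (f B x) \<le> M B"
    and "\<And>B. B \<in> S \<Longrightarrow> continuous_map X euclidean (f B)"
  shows "continuous_map X euclidean (\<lambda>x. \<Sum>\<^sub>\<infinity>B\<in>S. f B x)"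
proof -
  have unif: "uniform_limit (topspace X) (\<lambda>F x. \<Sum>B\<in>F. f B x) (\<lambda>x. \<Sum>\<^sub>\<infinity>B\<in>S. f B x)
      (finite_subsets_at_top S)"
    by (rule Weierstrass_m_test_general[OF assms(2,1)])
  have "continuous_map X Met_TC.mtopology (\<lambda>x. \<Sum>\<^sub>\<infinity>B\<in>S. f B x)"
  proof (rule Met_TC.continuous_map_uniform_limit)
    show "\<forall>\<^sub>F F in finite_subsets_at_top S. continuous_map X Met_TC.mtopology (\<lambda>x. \<Sum>B\<in>F. f B x)"
      using assms(3) by (intro eventually_finite_subsets_at_top_weakI) (simp add: continuous_map_sum subset_iff)
    show "\<forall>\<^sub>F F in finite_subsets_at_top S. \<forall>x\<in>topspace X.
            (\<Sum>\<^sub>\<infinity>B\<in>S. f B x) \<in> UNIV \<and> dist (\<Sum>B\<in>F. f B x) (\<Sum>\<^sub>\<infinity>B\<in>S. f B x) < \<epsilon>"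
      if "\<epsilon> > 0" for \<epsilon>
      using unif that unfolding uniform_limit_iff by simp
  qed (rule finite_subsets_at_top_neq_bot)
  then show ?thesis by simp
qed

lemma summable_on_finite_UN:
  fixes f :: "_ \<Rightarrow> 'a::{uniform_topological_group_add, topological_comm_monoid_add, ab_group_add, complete_uniform_space}"
  assumes "finite I" "\<And>i. i \<in> I \<Longrightarrow> f summable_on A i"
  shows "f summable_on (\<Union>i\<in>I. A i)"
  using assms by (induction rule: finite_induct) (simp_all add: summable_on_union)

lemma summable_on_finite_sets_meeting:
  fixes M :: "'v set \<Rightarrow> real"
  assumes "finite \<Lambda>" "\<And>x. M summable_on {B. finite B \<and> x \<in> B}"
  shows "M summable_on {B. finite B \<and> B \<inter> \<Lambda> \<noteq> {}}"
proof -
  have "M summable_on (\<Union>x\<in>\<Lambda>. {B. finite B \<and> x \<in> B})"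
    by (intro summable_on_finite_UN assms)
  then show ?thesis
    by (rule summable_on_subset) blast
qed

lemma continuous_map_gibbsH:
  fixes \<Phi> :: "'v set \<Rightarrow> ('v \<Rightarrow> 'a::finite) \<Rightarrow> real"
  assumes "finite \<Lambda>"
    and local: "\<And>B. finite B \<Longrightarrow> depends_on B (\<Phi> B)"
    and summable: "\<And>x. (\<lambda>B. SUP \<omega>. \<bar>\<Phi> B \<omega>\<bar>) summable_on {B. finite B \<and> x \<in> B}"
  shows "continuous_map (Omega_q_top q) euclideanreal (gibbsH q \<Phi> \<Lambda> \<sigma>)"
proof -
  define S where "S = {B. finite B \<and> B \<inter> \<Lambda> \<noteq> {} \<and> B - \<Lambda> \<noteq> {}}"
  define M where "M B = real q * (SUP \<omega>. \<bar>\<Phi> B \<omega>\<bar>)" for B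
  have "(\<lambda>B. SUP \<omega>. \<bar>\<Phi> B \<omega>\<bar>) summable_on S"
    by (rule summable_on_subset[OF summable_on_finite_sets_meeting[OF assms(1) summable]])
      (auto simp: S_def)
  then have "M summable_on S"
    unfolding M_def by (rule summable_on_cmult_right)
  moreover have "norm (\<Sum>i<q. \<Phi> B (glue \<Lambda> \<sigma> (\<omega> i))) \<le> M B" if "B \<in> S" for B \<omega>
  proof -
    have "finite B" using that by (simp add: S_def)
    have "\<bar>\<Sum>i<q. \<Phi> B (glue \<Lambda> \<sigma> (\<omega> i))\<bar> \<le> (\<Sum>i<q. \<bar>\<Phi> B (glue \<Lambda> \<sigma> (\<omega> i))\<bar>)"
      by (rule sum_abs)
    also have "\<dots> \<le> (\<Sum>i<q. SUP \<omega>. \<bar>\<Phi> B \<omega>\<bar>)"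
      by (intro sum_mono abs_le_SUP_abs_depends_on[OF \<open>finite B\<close> local[OF \<open>finite B\<close>]])
    finally show ?thesis by (simp add: M_def)
  qed
  moreover have "continuous_map (Omega_q_top q) euclideanreal (\<lambda>\<omega>. \<Sum>i<q. \<Phi> B (glue \<Lambda> \<sigma> (\<omega> i)))"
    if "B \<in> S" for B
  proof -
    have "finite B" using that by (simp add: S_def)
    show ?thesis
      by (intro continuous_map_sum finite_lessThan continuous_map_Omega_q_top_depends_on[OF \<open>finite B\<close>]
          depends_on_glue local[OF \<open>finite B\<close>]) simp
  qed
  ultimately have "continuous_map (Omega_q_top q) euclideanreal
      (\<lambda>\<omega>. \<Sum>\<^sub>\<infinity>B\<in>S. \<Sum>i<q. \<Phi> B (glue \<Lambda> \<sigma> (\<omega> i)))"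
    by (rule continuous_map_infsum_dominated)
  then show ?thesis
    unfolding gibbsH_def S_def
    by (intro continuous_map_add continuous_map_real_mult continuous_map_const[THEN iffD2]) simp_all
qed

lemma partZ_pos:
  assumes "finite \<Lambda>"
  shows "0 < partZ q \<Phi> \<Lambda> (\<omega> :: nat \<Rightarrow> 'v \<Rightarrow> 'a::finite)"
  unfolding partZ_def
  by (intro sum_pos finite_Omega_loc assms Omega_loc_nonempty) simp

theorem mainTheorem7:
  fixes \<Phi> :: "'v::countable set \<Rightarrow> ('v \<Rightarrow> 'a::finite) \<Rightarrow> real" and q :: nat
  assumes "q \<ge> 1"
    and "\<forall>B. finite B \<longrightarrow> \<Phi> B \<in> borel_measurable (F_sub B)"
    and "\<forall>x. (\<lambda>B. SUP \<omega>. \<bar>\<Phi> B \<omega>\<bar>) summable_on {B. finite B \<and> x \<in> B}"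
  shows "quasilocal q (gibbs_spec q \<Phi>)"
  unfolding quasilocal_def
proof (intro allI impI, elim conjE)
  fix \<Lambda> :: "'v set" and A :: "('v \<Rightarrow> 'a) set"
  assume "finite \<Lambda>" and "A \<in> sets (F_sub \<Lambda>)"
  have "depends_on B (\<Phi> B)" if "finite B" for B
    using assms(2) that by (intro depends_on_measurable_F_sub) simp
  with \<open>finite \<Lambda>\<close> assms(3) have weight: "continuous_map (Omega_q_top q) euclideanreal
      (\<lambda>\<omega>. exp (- gibbsH q \<Phi> \<Lambda> \<sigma> \<omega>))" for \<sigma>
    by (intro continuous_map_real_exp continuous_map_minus continuous_map_gibbsH) auto
  have event: "continuous_map (Omega_q_top q) euclideanreal
      (\<lambda>\<omega>. indicator A (glue \<Lambda> \<sigma> (\<omega> i)) :: real)" if "i < q" for \<sigma> i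
    by (intro continuous_map_Omega_q_top_depends_on[OF \<open>finite \<Lambda>\<close> _ that] depends_on_glue
        depends_on_indicator_F_sub \<open>A \<in> sets (F_sub \<Lambda>)\<close>)
  have "continuous_map (Omega_q_top q) euclideanreal (partZ q \<Phi> \<Lambda>)"
    unfolding partZ_def by (intro continuous_map_sum finite_Omega_loc \<open>finite \<Lambda>\<close> weight)
  moreover have "partZ q \<Phi> \<Lambda> \<omega> \<noteq> 0" for \<omega>
    using partZ_pos[OF \<open>finite \<Lambda>\<close>] by (metis less_irrefl)
  ultimately have normalisation:
    "continuous_map (Omega_q_top q) euclideanreal (\<lambda>\<omega>. 1 / partZ q \<Phi> \<Lambda> \<omega>)"
    by (intro continuous_map_real_divide continuous_map_const[THEN iffD2]) auto
  show "continuous_map (Omega_q_top q) euclideanreal (gibbs_spec q \<Phi> \<Lambda> A)"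
    unfolding gibbs_spec_def
    by (intro continuous_map_real_mult normalisation continuous_map_sum finite_Omega_loc
        \<open>finite \<Lambda>\<close> weight event continuous_map_const[THEN iffD2]) auto
qed

end
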